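(* Let $i\in\{3',3'',4\}$ and let $\tau$ be a finite topology on a finite set $X$. Then there exists a finite topology $\tau'$ on $X$ such that $G_i(\tau)\cong G_i(\tau')$ and the height of $\tau'$ is at most $3$.
   Context: A finite topology on $X$ is a family of subsets (open sets) containing $\emptyset,X$ and closed under unions and intersections; complements of open sets are closed. $m_\tau(x)$ is the intersection of all open sets containing $x$. The height of $\tau$ is the largest $h$ such that there are distinct $v_1,\dots,v_h\in X$ with $m_\tau(v_1)\subseteq\cdots\subseteq m_\tau(v_h)$. For distinct $x,y$, let (a): exist closed $J$, open $U_J,U_y$ with $x\in J\subseteq U_J$, $y\in U_y$, $U_J\cap U_y=\emptyset$; (b): exist closed $K$, open $U_x,U_K$ with $x\in U_x$, $y\in K\subseteq U_K$, $U_x\cap U_K=\emptyset$. $x,y$ are $T_{3'}$-separated if (a) or (b), $T_{3''}$-separated if (a) and (b), $T_4$-separated if there exist closed $J\ni x$, $K\ni y$ and disjoint open $U_J\supseteq J$, $U_K\supseteq K$. $G_i(\tau)$ is the simple graph on $X$ where distinct $x,y$ are adjacent iff not $T_i$-separated. *)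

theory Defs
  imports Main
begin

definition finite_topology :: "'a set \<Rightarrow> 'a set set \<Rightarrow> bool" where
  "finite_topology X T \<longleftrightarrow> finite X \<and> T \<subseteq> Pow X \<and> {} \<in> T \<and> X \<in> T \<and>
     (\<forall>S. S \<subseteq> T \<longrightarrow> \<Union>S \<in> T) \<and>
     (\<forall>S. S \<subseteq> T \<and> S \<noteq> {} \<longrightarrow> \<Inter>S \<in> T)"

definition open_in_top :: "'a set set \<Rightarrow> 'a set \<Rightarrow> bool" where
  "open_in_top T U \<longleftrightarrow> U \<in> T"

definition closed_in_top :: "'a set \<Rightarrow> 'a set set \<Rightarrow> 'a set \<Rightarrow> bool" where
  "closed_in_top X T K \<longleftrightarrow> K \<subseteq> X \<and> X - K \<in> T"

definition min_open :: "'a set set \<Rightarrow> 'a \<Rightarrow> 'a set" where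
  "min_open T x = \<Inter>{U \<in> T. x \<in> U}"

definition top_height :: "'a set \<Rightarrow> 'a set set \<Rightarrow> nat" where
  "top_height X T = Max {h. \<exists>v :: nat \<Rightarrow> 'a. inj_on v {..<h} \<and> v ` {..<h} \<subseteq> X \<and>
       (\<forall>j. Suc j < h \<longrightarrow> min_open T (v j) \<subseteq> min_open T (v (Suc j)))}"

definition sep_a :: "'a set \<Rightarrow> 'a set set \<Rightarrow> 'a \<Rightarrow> 'a \<Rightarrow> bool" where
  "sep_a X T x y \<longleftrightarrow> (\<exists>J UJ Uy. closed_in_top X T J \<and> UJ \<in> T \<and> Uy \<in> T \<and>
      x \<in> J \<and> J \<subseteq> UJ \<and> y \<in> Uy \<and> UJ \<inter> Uy = {})"

definition sep_b :: "'a set \<Rightarrow> 'a set set \<Rightarrow> 'a \<Rightarrow> 'a \<Rightarrow> bool" where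
  "sep_b X T x y \<longleftrightarrow> (\<exists>K Ux UK. closed_in_top X T K \<and> Ux \<in> T \<and> UK \<in> T \<and>
      x \<in> Ux \<and> y \<in> K \<and> K \<subseteq> UK \<and> Ux \<inter> UK = {})"

definition T3p_sep :: "'a set \<Rightarrow> 'a set set \<Rightarrow> 'a \<Rightarrow> 'a \<Rightarrow> bool" where
  "T3p_sep X T x y \<longleftrightarrow> sep_a X T x y \<or> sep_b X T x y"

definition T3pp_sep :: "'a set \<Rightarrow> 'a set set \<Rightarrow> 'a \<Rightarrow> 'a \<Rightarrow> bool" where
  "T3pp_sep X T x y \<longleftrightarrow> sep_a X T x y \<and> sep_b X T x y"

definition T4_sep :: "'a set \<Rightarrow> 'a set set \<Rightarrow> 'a \<Rightarrow> 'a \<Rightarrow> bool" where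
  "T4_sep X T x y \<longleftrightarrow> (\<exists>J K UJ UK. closed_in_top X T J \<and> closed_in_top X T K \<and>
      x \<in> J \<and> y \<in> K \<and> UJ \<in> T \<and> UK \<in> T \<and> J \<subseteq> UJ \<and> K \<subseteq> UK \<and> UJ \<inter> UK = {})"

datatype sep_axiom = T3p | T3pp | T4

fun sep_of :: "sep_axiom \<Rightarrow> 'a set \<Rightarrow> 'a set set \<Rightarrow> 'a \<Rightarrow> 'a \<Rightarrow> bool" where
  "sep_of T3p = T3p_sep"
| "sep_of T3pp = T3pp_sep"
| "sep_of T4 = T4_sep"

definition G_adj :: "sep_axiom \<Rightarrow> 'a set \<Rightarrow> 'a set set \<Rightarrow> 'a \<Rightarrow> 'a \<Rightarrow> bool" where
  "G_adj i X T x y \<longleftrightarrow> x \<in> X \<and> y \<in> X \<and> x \<noteq> y \<and> \<not> sep_of i X T x y"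

definition graph_iso :: "'a set \<Rightarrow> ('a \<Rightarrow> 'a \<Rightarrow> bool) \<Rightarrow> 'b set \<Rightarrow> ('b \<Rightarrow> 'b \<Rightarrow> bool) \<Rightarrow> bool" where
  "graph_iso V1 E1 V2 E2 \<longleftrightarrow> (\<exists>f. bij_betw f V1 V2 \<and>
      (\<forall>x\<in>V1. \<forall>y\<in>V1. E1 x y \<longleftrightarrow> E2 (f x) (f y)))"

end

theory Submission
  imports Defs
begin

(* The separation relations of a finite topology depend only on its specialization preorder
   (a below b iff a lies in the minimal open set of b), through the zigzags
   x <= w >= z <= y and x <= w1 >= z <= w2 >= y; the open sets are exactly the down-sets of
   this preorder.  In a finite preorder such zigzags can always be routed through maximal
   elements w and minimal elements z.  Hence they survive when the preorder is thinned out to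
   the strict comparisons that start at a minimal or end at a maximal element, an isolated
   equivalence class (minimal and maximal at once) becoming a star around one representative.
   In the thinned order the middle element of a two-step chain is neither minimal nor maximal,
   so there is no chain of four elements and its down-set topology has height at most 3. *)

definition zigzag3 :: "'a set \<Rightarrow> ('a \<Rightarrow> 'a \<Rightarrow> bool) \<Rightarrow> 'a \<Rightarrow> 'a \<Rightarrow> bool" where
  "zigzag3 X le x y \<longleftrightarrow> (\<exists>w\<in>X. \<exists>z\<in>X. le x w \<and> le z w \<and> le z y)"

definition zigzag4 :: "'a set \<Rightarrow> ('a \<Rightarrow> 'a \<Rightarrow> bool) \<Rightarrow> 'a \<Rightarrow> 'a \<Rightarrow> bool" where
  "zigzag4 X le x y \<longleftrightarrow> (\<exists>w1\<in>X. \<exists>w2\<in>X. \<exists>z\<in>X. le x w1 \<and> le z w1 \<and> le z w2 \<and> le y w2)"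

lemma zigzag3_cong:
  assumes "\<And>a b. a \<in> X \<Longrightarrow> b \<in> X \<Longrightarrow> R a b \<longleftrightarrow> S a b" "x \<in> X" "y \<in> X"
  shows "zigzag3 X R x y \<longleftrightarrow> zigzag3 X S x y"
  unfolding zigzag3_def using assms by auto

lemma zigzag4_cong:
  assumes "\<And>a b. a \<in> X \<Longrightarrow> b \<in> X \<Longrightarrow> R a b \<longleftrightarrow> S a b" "x \<in> X" "y \<in> X"
  shows "zigzag4 X R x y \<longleftrightarrow> zigzag4 X S x y"
  unfolding zigzag4_def using assms by auto

locale finite_preorder =
  fixes X :: "'a set" and le :: "'a \<Rightarrow> 'a \<Rightarrow> bool" (infix \<open>\<sqsubseteq>\<close> 50)
  assumes finite: "finite X"
    and refl: "a \<in> X \<Longrightarrow> a \<sqsubseteq> a"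
    and trans: "a \<in> X \<Longrightarrow> b \<in> X \<Longrightarrow> c \<in> X \<Longrightarrow> a \<sqsubseteq> b \<Longrightarrow> b \<sqsubseteq> c \<Longrightarrow> a \<sqsubseteq> c"
begin

abbreviation strict (infix \<open>\<sqsubset>\<close> 50) where "a \<sqsubset> b \<equiv> a \<sqsubseteq> b \<and> \<not> b \<sqsubseteq> a"

definition maximal :: "'a \<Rightarrow> bool" where
  "maximal x \<longleftrightarrow> x \<in> X \<and> (\<forall>u\<in>X. x \<sqsubseteq> u \<longrightarrow> u \<sqsubseteq> x)"

definition minimal :: "'a \<Rightarrow> bool" where
  "minimal x \<longleftrightarrow> x \<in> X \<and> (\<forall>u\<in>X. u \<sqsubseteq> x \<longrightarrow> x \<sqsubseteq> u)"

definition isolated :: "'a \<Rightarrow> bool" where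
  "isolated x \<longleftrightarrow> minimal x \<and> maximal x"

definition rep :: "'a \<Rightarrow> 'a" where
  "rep b = (SOME c. c \<in> X \<and> c \<sqsubseteq> b \<and> b \<sqsubseteq> c)"

lemma transp_on_strict: "transp_on X (\<lambda>a b. a \<sqsubset> b)"
  by (auto simp: transp_on_def intro: trans)

lemma asymp_on_strict: "asymp_on X (\<lambda>a b. a \<sqsubset> b)"
  by (auto simp: asymp_on_def)

lemma ex_maximal_above:
  assumes "w \<in> X"
  shows "\<exists>v. maximal v \<and> w \<sqsubseteq> v"
proof -
  obtain v where v: "v \<in> X" "w \<sqsubseteq> v" and top: "\<forall>u\<in>X. v \<sqsubset> u \<longrightarrow> \<not> w \<sqsubseteq> u"
    using Finite_Set.bex_max_element_with_property[OF finite asymp_on_strict transp_on_strict,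
        of "\<lambda>v. w \<sqsubseteq> v"] assms refl by blast
  have "maximal v"
    unfolding maximal_def using v top assms by (blast intro: trans)
  with v show ?thesis by blast
qed

lemma ex_minimal_below:
  assumes "w \<in> X"
  shows "\<exists>v. minimal v \<and> v \<sqsubseteq> w"
proof -
  obtain v where v: "v \<in> X" "v \<sqsubseteq> w" and bot: "\<forall>u\<in>X. u \<sqsubset> v \<longrightarrow> \<not> u \<sqsubseteq> w"
    using Finite_Set.bex_min_element_with_property[OF finite asymp_on_strict transp_on_strict,
        of "\<lambda>v. v \<sqsubseteq> w"] assms refl by blast
  have "minimal v"
    unfolding minimal_def using v bot assms by (blast intro: trans)
  with v show ?thesis by blast
qed

lemma maximal_up: "maximal a \<Longrightarrow> b \<in> X \<Longrightarrow> a \<sqsubseteq> b \<Longrightarrow> maximal b"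
  unfolding maximal_def by (blast intro: trans)

lemma minimal_down: "minimal a \<Longrightarrow> b \<in> X \<Longrightarrow> b \<sqsubseteq> a \<Longrightarrow> minimal b"
  unfolding minimal_def by (blast intro: trans)

lemma isolated_comparable:
  assumes "isolated z" "a \<in> X" "a \<sqsubseteq> z \<or> z \<sqsubseteq> a"
  shows "isolated a \<and> a \<sqsubseteq> z \<and> z \<sqsubseteq> a"
proof -
  have "a \<sqsubseteq> z" "z \<sqsubseteq> a"
    using assms unfolding isolated_def minimal_def maximal_def by blast+
  then show ?thesis
    using assms maximal_up minimal_down unfolding isolated_def by blast
qed

lemma rep: "b \<in> X \<Longrightarrow> rep b \<in> X \<and> rep b \<sqsubseteq> b \<and> b \<sqsubseteq> rep b"
  unfolding rep_def by (rule someI[of _ b]) (auto intro: refl)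

lemma rep_cong: "a \<in> X \<Longrightarrow> b \<in> X \<Longrightarrow> a \<sqsubseteq> b \<Longrightarrow> b \<sqsubseteq> a \<Longrightarrow> rep a = rep b"
  unfolding rep_def by (metis trans)

definition flat :: "'a \<Rightarrow> 'a \<Rightarrow> bool" where
  "flat a b \<longleftrightarrow> a = b \<or> (a \<sqsubset> b \<and> (minimal a \<or> maximal b))
     \<or> (isolated a \<and> a \<sqsubseteq> b \<and> b \<sqsubseteq> a \<and> a = rep b)"

lemma flat_refl: "flat a a"
  unfolding flat_def by simp

lemma flat_imp_le: "a \<in> X \<Longrightarrow> flat a b \<Longrightarrow> a \<sqsubseteq> b"
  unfolding flat_def using refl by auto

lemma flat_into_isolated:
  assumes "a \<in> X" "b \<in> X" "flat a b" "a \<noteq> b" "isolated b"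
  shows "isolated a \<and> a \<sqsubseteq> b \<and> b \<sqsubseteq> a \<and> a = rep b"
proof -
  have "isolated a \<and> a \<sqsubseteq> b \<and> b \<sqsubseteq> a"
    using isolated_comparable[OF assms(5,1)] flat_imp_le assms by blast
  with assms show ?thesis
    unfolding flat_def by blast
qed

lemma flat_strict:
  assumes "a \<in> X" "b \<in> X" "flat a b" "a \<noteq> b" "\<not> isolated b"
  shows "a \<sqsubset> b \<and> (minimal a \<or> maximal b)"
  using assms isolated_comparable unfolding flat_def by blast

lemma flat_two_steps:
  assumes X: "a \<in> X" "b \<in> X" "c \<in> X" and "flat a b" "flat b c" "a \<noteq> b" "b \<noteq> c"
  shows "minimal a \<and> a \<sqsubset> b \<and> b \<sqsubset> c"
proof -
  have "\<not> isolated b"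
  proof
    assume b: "isolated b"
    then have "isolated c" "c \<sqsubseteq> b"
      using isolated_comparable[OF b X(3)] flat_imp_le assms by blast+
    then have "a = rep b" "b = rep c"
      using flat_into_isolated assms b by blast+
    with rep_cong[OF X(2,3)] \<open>c \<sqsubseteq> b\<close> flat_imp_le assms show False
      by metis
  qed
  moreover have "\<not> isolated c"
    using isolated_comparable flat_imp_le assms calculation by blast
  ultimately have "a \<sqsubset> b \<and> (minimal a \<or> maximal b)" "b \<sqsubset> c"
    using flat_strict assms by blast+
  moreover have "\<not> maximal b"
    using \<open>b \<sqsubset> c\<close> X unfolding maximal_def by blast
  ultimately show ?thesis by blast
qed

lemma flat_trans:
  assumes "a \<in> X" "b \<in> X" "c \<in> X" "flat a b" "flat b c"
  shows "flat a c"
proof (cases "a = b \<or> b = c")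
  case True
  with assms show ?thesis by blast
next
  case False
  then have "minimal a \<and> a \<sqsubset> b \<and> b \<sqsubset> c"
    using flat_two_steps assms by blast
  then show ?thesis
    unfolding flat_def using assms by (blast intro: trans)
qed

lemma no_flat_chain4:
  assumes "a \<in> X" "b \<in> X" "c \<in> X" "d \<in> X"
    and "flat a b" "flat b c" "flat c d" "a \<noteq> b" "b \<noteq> c" "c \<noteq> d"
  shows False
proof -
  have "a \<sqsubset> b" "minimal b"
    using flat_two_steps assms by blast+
  with assms show False
    unfolding minimal_def by blast
qed

lemma flat_rep_isolated:
  assumes "isolated x" "y \<in> X" "x \<sqsubseteq> y"
  shows "flat (rep x) y"
proof -
  have x: "x \<in> X" "y \<sqsubseteq> x" "isolated y"
    using assms isolated_comparable unfolding isolated_def minimal_def by blast+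
  then have "rep x \<in> X" "rep x \<sqsubseteq> x" "x \<sqsubseteq> rep x"
    using rep by blast+
  moreover have "isolated (rep x)"
    using isolated_comparable assms calculation by blast
  moreover have "rep x = rep y"
    using rep_cong assms x by blast
  ultimately show ?thesis
    unfolding flat_def using assms x by (blast intro: trans)
qed

lemma ex_maximal_flat_above:
  assumes "x \<in> X" "w \<in> X" "x \<sqsubseteq> w"
  shows "\<exists>w'. maximal w' \<and> w \<sqsubseteq> w' \<and> flat x w'"
proof (cases "maximal x")
  case True
  then show ?thesis
    using assms flat_refl unfolding maximal_def by blast
next
  case False
  obtain v where v: "maximal v" "w \<sqsubseteq> v"
    using ex_maximal_above assms by blast
  then have "v \<in> X"
    unfolding maximal_def by blast
  with v assms False have "x \<sqsubset> v"
    using maximal_up by (blast intro: trans)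
  with v show ?thesis
    unfolding flat_def by blast
qed

lemma ex_minimal_flat_below:
  assumes "y \<in> X" "z \<in> X" "z \<sqsubseteq> y"
  shows "\<exists>z'. minimal z' \<and> z' \<sqsubseteq> z \<and> flat z' y"
proof (cases "minimal y")
  case True
  then show ?thesis
    using assms flat_refl unfolding minimal_def by blast
next
  case False
  obtain v where v: "minimal v" "v \<sqsubseteq> z"
    using ex_minimal_below assms by blast
  then have "v \<in> X"
    unfolding minimal_def by blast
  with v assms False have "v \<sqsubset> y"
    using minimal_down by (blast intro: trans)
  with v show ?thesis
    unfolding flat_def by blast
qed

(* The witness x excludes w \<sqsubseteq> z: the class of z and w would then be isolated
   and would contain every element below w, including x. *)
lemma flat_minimal_maximalI:
  assumes "minimal z" "maximal w" "z \<sqsubseteq> w" "x \<in> X" "x \<sqsubseteq> w" "\<not> isolated x"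
  shows "flat z w"
proof (cases "w \<sqsubseteq> z")
  case True
  then have "isolated w"
    using assms minimal_down unfolding isolated_def maximal_def by blast
  with assms show ?thesis
    using isolated_comparable by blast
next
  case False
  with assms show ?thesis
    unfolding flat_def by blast
qed

lemma zigzag3_flat_iff:
  assumes "x \<in> X" "y \<in> X"
  shows "zigzag3 X flat x y \<longleftrightarrow> zigzag3 X (\<sqsubseteq>) x y"
proof
  assume "zigzag3 X flat x y"
  then show "zigzag3 X (\<sqsubseteq>) x y"
    unfolding zigzag3_def using assms flat_imp_le by blast
next
  assume "zigzag3 X (\<sqsubseteq>) x y"
  then obtain w z where wz: "w \<in> X" "z \<in> X" "x \<sqsubseteq> w" "z \<sqsubseteq> w" "z \<sqsubseteq> y"
    unfolding zigzag3_def by blast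
  show "zigzag3 X flat x y"
  proof (cases "isolated x")
    case True
    then have "x \<sqsubseteq> y"
      using isolated_comparable assms wz by (meson trans)
    with True assms show ?thesis
      unfolding zigzag3_def using flat_refl flat_rep_isolated rep refl by metis
  next
    case False
    obtain w' where w': "maximal w'" "w \<sqsubseteq> w'" "flat x w'"
      using ex_maximal_flat_above assms wz by blast
    obtain z' where z': "minimal z'" "z' \<sqsubseteq> z" "flat z' y"
      using ex_minimal_flat_below assms wz by blast
    have X: "w' \<in> X" "z' \<in> X"
      using w' z' unfolding maximal_def minimal_def by blast+
    then have "flat z' w'"
      using flat_minimal_maximalI[OF z'(1) w'(1) _ assms(1) _ False] w' z' wz assms
      by (meson trans)
    with w' z' X show ?thesis
      unfolding zigzag3_def by blast
  qed
qed

lemma zigzag4_flat_iff: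
  assumes "x \<in> X" "y \<in> X"
  shows "zigzag4 X flat x y \<longleftrightarrow> zigzag4 X (\<sqsubseteq>) x y"
proof
  assume "zigzag4 X flat x y"
  then show "zigzag4 X (\<sqsubseteq>) x y"
    unfolding zigzag4_def using assms flat_imp_le by blast
next
  assume "zigzag4 X (\<sqsubseteq>) x y"
  then obtain w1 w2 z where wz: "w1 \<in> X" "w2 \<in> X" "z \<in> X"
      "x \<sqsubseteq> w1" "z \<sqsubseteq> w1" "z \<sqsubseteq> w2" "y \<sqsubseteq> w2"
    unfolding zigzag4_def by blast
  show "zigzag4 X flat x y"
  proof (cases "isolated x \<or> isolated y")
    case True
    then have "isolated x \<and> x \<sqsubseteq> y"
      using isolated_comparable assms wz by (meson trans)
    with assms show ?thesis
      unfolding zigzag4_def using flat_refl flat_rep_isolated rep refl by metis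
  next
    case False
    obtain w1' where w1': "maximal w1'" "w1 \<sqsubseteq> w1'" "flat x w1'"
      using ex_maximal_flat_above assms wz by blast
    obtain w2' where w2': "maximal w2'" "w2 \<sqsubseteq> w2'" "flat y w2'"
      using ex_maximal_flat_above assms wz by blast
    obtain z' where z': "minimal z'" "z' \<sqsubseteq> z"
      using ex_minimal_below wz by blast
    have X: "w1' \<in> X" "w2' \<in> X" "z' \<in> X"
      using w1' w2' z' unfolding maximal_def minimal_def by blast+
    then have "flat z' w1'" "flat z' w2'"
      using flat_minimal_maximalI[OF z'(1) w1'(1) _ assms(1)]
        flat_minimal_maximalI[OF z'(1) w2'(1) _ assms(2)] False w1' w2' z' wz assms
      by (meson trans)+
    with w1' w2' X show ?thesis
      unfolding zigzag4_def by blast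
  qed
qed

end

definition specialization :: "'a set set \<Rightarrow> 'a \<Rightarrow> 'a \<Rightarrow> bool" where
  "specialization T a b \<longleftrightarrow> a \<in> min_open T b"

lemma self_in_min_open: "x \<in> min_open T x"
  unfolding min_open_def by blast

lemma specialization_if_min_open_subset:
  "min_open T a \<subseteq> min_open T b \<Longrightarrow> specialization T a b"
  unfolding specialization_def using self_in_min_open[of a T] by blast

lemma sep_b_iff_sep_a: "sep_b X T x y \<longleftrightarrow> sep_a X T y x"
  unfolding sep_a_def sep_b_def by blast

locale finite_top =
  fixes X :: "'a set" and T :: "'a set set"
  assumes finite_topology: "finite_topology X T"
begin

lemma finite_space: "finite X"
  and open_space: "X \<in> T"
  and open_Union: "S \<subseteq> T \<Longrightarrow> \<Union>S \<in> T"
  and open_Inter: "S \<subseteq> T \<Longrightarrow> S \<noteq> {} \<Longrightarrow> \<Inter>S \<in> T"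
  using finite_topology unfolding finite_topology_def by auto

lemma min_open_in: "x \<in> X \<Longrightarrow> min_open T x \<in> T"
  unfolding min_open_def using open_space by (intro open_Inter) auto

lemma min_open_least: "U \<in> T \<Longrightarrow> x \<in> U \<Longrightarrow> min_open T x \<subseteq> U"
  unfolding min_open_def by blast

lemma min_open_subset: "x \<in> X \<Longrightarrow> min_open T x \<subseteq> X"
  using min_open_least open_space by blast

lemma finite_preorder_specialization: "finite_preorder X (specialization T)"
proof
  show "finite X" by (rule finite_space)
  show "specialization T a a" for a
    unfolding specialization_def by (rule self_in_min_open)
  show "specialization T a c"
    if "c \<in> X" "specialization T a b" "specialization T b c" for a b c
    using that min_open_least[OF min_open_in] unfolding specialization_def by blast
qed

lemma open_down_closed: "U \<in> T \<Longrightarrow> w \<in> U \<Longrightarrow> specialization T z w \<Longrightarrow> z \<in> U"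
  unfolding specialization_def using min_open_least by blast

lemma closed_up_closed:
  assumes "closed_in_top X T J" "x \<in> J" "w \<in> X" "specialization T x w"
  shows "w \<in> J"
  using assms open_down_closed[of "X - J" w x] unfolding closed_in_top_def by blast

lemma open_hull_in: "A \<subseteq> X \<Longrightarrow> \<Union>(min_open T ` A) \<in> T"
  by (intro open_Union) (auto intro: min_open_in)

lemma open_hulls_disjoint_iff:
  assumes "A \<subseteq> X" "B \<subseteq> X"
  shows "\<Union>(min_open T ` A) \<inter> \<Union>(min_open T ` B) = {} \<longleftrightarrow>
    \<not> (\<exists>a\<in>A. \<exists>b\<in>B. \<exists>z\<in>X. specialization T z a \<and> specialization T z b)"
proof -
  have "z \<in> X" if "z \<in> min_open T a" "a \<in> A" for z a
    using that assms min_open_subset by blast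
  then show ?thesis
    unfolding specialization_def by blast
qed

lemma up_set_closed:
  assumes "x \<in> X"
  shows "closed_in_top X T {w\<in>X. specialization T x w}"
proof -
  let ?J = "{w\<in>X. specialization T x w}"
  have "\<Union>(min_open T ` (X - ?J)) \<subseteq> X - ?J"
  proof
    fix u assume "u \<in> \<Union>(min_open T ` (X - ?J))"
    then obtain v where v: "v \<in> X - ?J" "specialization T u v"
      unfolding specialization_def by blast
    then have "u \<in> X"
      using min_open_subset unfolding specialization_def by blast
    moreover have "\<not> specialization T x u"
      using v finite_preorder.trans[OF finite_preorder_specialization, of x u v] assms
        \<open>u \<in> X\<close> by blast
    ultimately show "u \<in> X - ?J" by simp
  qed
  then have "X - ?J = \<Union>(min_open T ` (X - ?J))"
    using self_in_min_open[of _ T] by blast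
  then show ?thesis
    unfolding closed_in_top_def using open_hull_in[of "X - ?J"] by auto
qed

lemma sep_a_iff:
  assumes "x \<in> X" "y \<in> X"
  shows "sep_a X T x y \<longleftrightarrow> \<not> zigzag3 X (specialization T) x y"
proof
  assume "sep_a X T x y"
  then obtain J UJ Uy where J: "closed_in_top X T J" "x \<in> J" "J \<subseteq> UJ"
    and U: "UJ \<in> T" "Uy \<in> T" "y \<in> Uy" "UJ \<inter> Uy = {}"
    unfolding sep_a_def by blast
  show "\<not> zigzag3 X (specialization T) x y"
  proof
    assume "zigzag3 X (specialization T) x y"
    then obtain w z where "w \<in> X" "specialization T x w" "specialization T z w"
      "specialization T z y"
      unfolding zigzag3_def by blast
    then have "z \<in> UJ" "z \<in> Uy"
      using closed_up_closed[OF J(1,2)] J(3) open_down_closed U by blast+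
    with U(4) show False by blast
  qed
next
  assume no_zigzag: "\<not> zigzag3 X (specialization T) x y"
  let ?J = "{w\<in>X. specialization T x w}"
  have no_link: "\<not> (\<exists>a\<in>?J. \<exists>b\<in>{y}. \<exists>z\<in>X. specialization T z a \<and> specialization T z b)"
    using no_zigzag unfolding zigzag3_def by auto
  have "?J \<subseteq> X" "{y} \<subseteq> X"
    using assms by auto
  from open_hulls_disjoint_iff[OF this] no_link
  have "\<Union>(min_open T ` ?J) \<inter> \<Union>(min_open T ` {y}) = {}"
    by (rule iffD2)
  then have "\<Union>(min_open T ` ?J) \<inter> min_open T y = {}"
    by simp
  moreover have "x \<in> ?J" "?J \<subseteq> \<Union>(min_open T ` ?J)" "y \<in> min_open T y"
    using assms self_in_min_open[of _ T] unfolding specialization_def by blast+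
  moreover note up_set_closed[OF assms(1)] min_open_in[OF assms(2)]
  moreover have "\<Union>(min_open T ` ?J) \<in> T"
    by (rule open_hull_in) blast
  ultimately show "sep_a X T x y"
    unfolding sep_a_def by blast
qed

lemma T4_sep_iff:
  assumes "x \<in> X" "y \<in> X"
  shows "T4_sep X T x y \<longleftrightarrow> \<not> zigzag4 X (specialization T) x y"
proof
  assume "T4_sep X T x y"
  then obtain J K UJ UK where J: "closed_in_top X T J" "x \<in> J" "J \<subseteq> UJ"
    and K: "closed_in_top X T K" "y \<in> K" "K \<subseteq> UK"
    and U: "UJ \<in> T" "UK \<in> T" "UJ \<inter> UK = {}"
    unfolding T4_sep_def by blast
  show "\<not> zigzag4 X (specialization T) x y"
  proof
    assume "zigzag4 X (specialization T) x y"
    then obtain w1 w2 z where w: "w1 \<in> X" "w2 \<in> X" "specialization T x w1"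
      "specialization T y w2" and z: "specialization T z w1" "specialization T z w2"
      unfolding zigzag4_def by blast
    have "w1 \<in> UJ" "w2 \<in> UK"
      using closed_up_closed[OF J(1,2)] closed_up_closed[OF K(1,2)] J(3) K(3) w by blast+
    then have "z \<in> UJ" "z \<in> UK"
      using open_down_closed U z by blast+
    with U(3) show False by blast
  qed
next
  assume no_zigzag: "\<not> zigzag4 X (specialization T) x y"
  let ?J = "{w\<in>X. specialization T x w}" and ?K = "{w\<in>X. specialization T y w}"
  have no_link: "\<not> (\<exists>a\<in>?J. \<exists>b\<in>?K. \<exists>z\<in>X. specialization T z a \<and> specialization T z b)"
    using no_zigzag unfolding zigzag4_def by auto
  have "?J \<subseteq> X" "?K \<subseteq> X"
    using assms by auto
  from open_hulls_disjoint_iff[OF this] no_link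
  have "\<Union>(min_open T ` ?J) \<inter> \<Union>(min_open T ` ?K) = {}"
    by (rule iffD2)
  moreover have "x \<in> ?J" "?J \<subseteq> \<Union>(min_open T ` ?J)" "y \<in> ?K" "?K \<subseteq> \<Union>(min_open T ` ?K)"
    using assms self_in_min_open[of _ T] unfolding specialization_def by blast+
  moreover note up_set_closed[OF assms(1)] up_set_closed[OF assms(2)]
  moreover have "\<Union>(min_open T ` ?J) \<in> T" "\<Union>(min_open T ` ?K) \<in> T"
    by (rule open_hull_in, blast)+
  ultimately show "T4_sep X T x y"
    unfolding T4_sep_def by blast
qed

lemma sep_of_iff:
  assumes "x \<in> X" "y \<in> X"
  shows "sep_of i X T x y \<longleftrightarrow> (case i of
      T3p \<Rightarrow> \<not> zigzag3 X (specialization T) x y \<or> \<not> zigzag3 X (specialization T) y x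
    | T3pp \<Rightarrow> \<not> zigzag3 X (specialization T) x y \<and> \<not> zigzag3 X (specialization T) y x
    | T4 \<Rightarrow> \<not> zigzag4 X (specialization T) x y)"
  using assms
  by (cases i) (simp_all add: T3p_sep_def T3pp_sep_def sep_b_iff_sep_a sep_a_iff T4_sep_iff)

end

definition down_sets :: "'a set \<Rightarrow> ('a \<Rightarrow> 'a \<Rightarrow> bool) \<Rightarrow> 'a set set" where
  "down_sets X R = {U. U \<subseteq> X \<and> (\<forall>a\<in>X. \<forall>b\<in>U. R a b \<longrightarrow> a \<in> U)}"

lemma finite_topology_down_sets: "finite X \<Longrightarrow> finite_topology X (down_sets X R)"
  unfolding finite_topology_def down_sets_def by blast

lemma specialization_down_sets:
  assumes refl: "\<And>a. a \<in> X \<Longrightarrow> R a a"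
    and trans: "\<And>a b c. a \<in> X \<Longrightarrow> b \<in> X \<Longrightarrow> c \<in> X \<Longrightarrow> R a b \<Longrightarrow> R b c \<Longrightarrow> R a c"
    and "a \<in> X" "b \<in> X"
  shows "specialization (down_sets X R) a b \<longleftrightarrow> R a b"
proof
  have "{c\<in>X. R c b} \<in> down_sets X R" "b \<in> {c\<in>X. R c b}"
    unfolding down_sets_def using assms by blast+
  then show "specialization (down_sets X R) a b \<Longrightarrow> R a b"
    unfolding specialization_def min_open_def by blast
next
  show "R a b \<Longrightarrow> specialization (down_sets X R) a b"
    unfolding specialization_def min_open_def down_sets_def using assms(3) by blast
qed

lemma top_height_leI:
  assumes "\<And>h v. inj_on v {..<h} \<Longrightarrow> v ` {..<h} \<subseteq> X \<Longrightarrow>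
      (\<forall>j. Suc j < h \<longrightarrow> min_open T (v j) \<subseteq> min_open T (v (Suc j))) \<Longrightarrow> h \<le> n"
  shows "top_height X T \<le> n"
proof -
  let ?H = "{h. \<exists>v :: nat \<Rightarrow> 'a. inj_on v {..<h} \<and> v ` {..<h} \<subseteq> X \<and>
       (\<forall>j. Suc j < h \<longrightarrow> min_open T (v j) \<subseteq> min_open T (v (Suc j)))}"
  have "0 \<in> ?H"
    by auto
  then have "?H \<noteq> {}"
    by blast
  moreover have bounded: "\<forall>h\<in>?H. h \<le> n"
    using assms by blast
  moreover have "finite ?H"
    using bounded finite_nat_set_iff_bounded_le by blast
  ultimately show ?thesis
    unfolding top_height_def by (intro Max.boundedI) auto
qed

context finite_preorder
begin

lemma specialization_down_sets_flat:
  "a \<in> X \<Longrightarrow> b \<in> X \<Longrightarrow> specialization (down_sets X flat) a b \<longleftrightarrow> flat a b"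
  by (rule specialization_down_sets) (auto intro: flat_refl flat_trans)

lemma top_height_down_sets_flat: "top_height X (down_sets X flat) \<le> 3"
proof (rule top_height_leI, rule ccontr)
  fix h and v :: "nat \<Rightarrow> 'a"
  assume inj: "inj_on v {..<h}" and X: "v ` {..<h} \<subseteq> X" and "\<not> h \<le> 3"
    and chain: "\<forall>j. Suc j < h \<longrightarrow>
      min_open (down_sets X flat) (v j) \<subseteq> min_open (down_sets X flat) (v (Suc j))"
  then have "j < 4 \<Longrightarrow> v j \<in> X" for j
    by auto
  moreover have "v j \<noteq> v (Suc j)" if "j < 3" for j
    using inj_onD[OF inj, of j "Suc j"] that \<open>\<not> h \<le> 3\<close> by auto
  moreover have "flat (v j) (v (Suc j))" if "j < 3" for j
  proof -
    have "specialization (down_sets X flat) (v j) (v (Suc j))"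
      using chain that \<open>\<not> h \<le> 3\<close> by (intro specialization_if_min_open_subset) auto
    with calculation(1)[of j] calculation(1)[of "Suc j"] that show ?thesis
      using specialization_down_sets_flat by simp
  qed
  ultimately show False
    using no_flat_chain4[of "v 0" "v 1" "v 2" "v 3"] by (simp add: numeral_eq_Suc)
qed

end

theorem lemma3p6:
  fixes X :: "'a set" and T :: "'a set set" and i :: sep_axiom
  assumes "finite X" and "finite_topology X T"
  shows "\<exists>T'. finite_topology X T' \<and>
           graph_iso X (G_adj i X T) X (G_adj i X T') \<and>
           top_height X T' \<le> 3"
proof -
  interpret finite_top X T
    by (rule finite_top.intro) (fact assms(2))
  interpret P: finite_preorder X "specialization T"
    by (rule finite_preorder_specialization)
  define T' where "T' = down_sets X P.flat"
  have top': "finite_topology X T'"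
    unfolding T'_def using assms(1) by (rule finite_topology_down_sets)
  interpret T': finite_top X T'
    by (rule finite_top.intro) (fact top')
  have zigzags: "zigzag3 X (specialization T') x y \<longleftrightarrow> zigzag3 X (specialization T) x y"
    "zigzag4 X (specialization T') x y \<longleftrightarrow> zigzag4 X (specialization T) x y"
    if "x \<in> X" "y \<in> X" for x y
    using zigzag3_cong[of X "specialization T'" P.flat] zigzag4_cong[of X "specialization T'" P.flat]
      P.zigzag3_flat_iff P.zigzag4_flat_iff P.specialization_down_sets_flat that
    unfolding T'_def by blast+
  have "sep_of i X T x y \<longleftrightarrow> sep_of i X T' x y" if "x \<in> X" "y \<in> X" for x y
    by (simp only: sep_of_iff[OF that] T'.sep_of_iff[OF that] zigzags[OF that]
        zigzags[OF that(2,1)])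
  then have "G_adj i X T x y \<longleftrightarrow> G_adj i X T' x y" for x y
    unfolding G_adj_def by blast
  then have "graph_iso X (G_adj i X T) X (G_adj i X T')"
    unfolding graph_iso_def by (intro exI[of _ id]) simp
  moreover have "top_height X T' \<le> 3"
    unfolding T'_def by (rule P.top_height_down_sets_flat)
  ultimately show ?thesis
    using top' by blast
qed

end
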